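(* Let $n\ge2$, let $k$ be an integer with $1\le k\le n$, and let $M$ be any mechanism that is DIC for capacity $k$. Define $\alpha=\frac{2k}{k+1}$ if $k\le\lceil (n-1)/2\rceil$, and $\alpha=\max\{\frac{n-1}{k+1},1\}$ otherwise. Then $M$ is at best an $\alpha$-approximation: for every $\alpha'<\alpha$ there exists a profile $\boldsymbol{x}\in[0,1]^n$ with $\Pi^*(\boldsymbol{x},k)>\alpha'\,\Pi_M(\boldsymbol{x},k)$.
   Context: There are $n$ agents $N=\{1,\dots,n\}$ with locations $x_i\in[0,1]$, profile $\boldsymbol{x}$. A mechanism is a deterministic function $M:[0,1]^n\to[0,1]$ giving the facility location from reported locations. The facility has capacity $k$. Given $\boldsymbol{x}$ and $s$, agent $i$ has higher priority than $j$ if $|s-x_i|<|s-x_j|$, ties broken by a fixed deterministic rule; $N_k^*(\boldsymbol{x},s)$ is the set of the $k$ highest-priority agents. Agent $i$'s ex-post equilibrium utility (of the subgame in which agents choose whether to travel to the capacity-$k$ facility, excess travellers rationed by priority) is $u_i^*(s,\boldsymbol{x},k)=1-|s-x_i|$ if $i\in N_k^*(\boldsymbol{x},s)$ and $0$ otherwise, computed at true locations. $M$ is DIC for capacity $k$ if for every $i$, every true profile $\boldsymbol{x}$, every $x_i'\in[0,1]$, and every reports $\hat{\boldsymbol{x}}_{-i}$ of the others, $u_i^*(M(x_i,\hat{\boldsymbol{x}}_{-i}),\boldsymbol{x},k)\ge u_i^*(M(x_i',\hat{\boldsymbol{x}}_{-i}),\boldsymbol{x},k)$. Optimal welfare: $\Pi^*(\boldsymbol{x},k)=\max_{s\in[0,1]}\sum_i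 u_i^*(s,\boldsymbol{x},k)$; mechanism welfare: $\Pi_M(\boldsymbol{x},k)=\sum_i u_i^*(M(\boldsymbol{x}),\boldsymbol{x},k)$. $M$ is an $\alpha$-approximation if $\max_{\boldsymbol{x}}\Pi^*(\boldsymbol{x},k)/\Pi_M(\boldsymbol{x},k)\le\alpha$. *)

theory Defs
  imports Complex_Main
begin

text \<open>Agents are the elements of a finite type 'n (so n = CARD('n)).
  Ties in priority are broken by a fixed injective rank function r on agents:
  lower rank wins a tie.\<close>

type_synonym 'n profile = "'n \<Rightarrow> real"

definition valid_profile :: "'n profile \<Rightarrow> bool" where
  "valid_profile x \<longleftrightarrow> (\<forall>i. x i \<in> {0..1})"

definition higher_prio :: "('n \<Rightarrow> nat) \<Rightarrow> 'n profile \<Rightarrow> real \<Rightarrow> 'n \<Rightarrow> 'n \<Rightarrow> bool" where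
  "higher_prio r x s i j \<longleftrightarrow>
     \<bar>s - x i\<bar> < \<bar>s - x j\<bar> \<or> (\<bar>s - x i\<bar> = \<bar>s - x j\<bar> \<and> r i < r j)"

definition topk :: "('n::finite \<Rightarrow> nat) \<Rightarrow> 'n profile \<Rightarrow> real \<Rightarrow> nat \<Rightarrow> 'n set" where
  "topk r x s k = {i. card {j. higher_prio r x s j i} < k}"

definition eq_util :: "('n::finite \<Rightarrow> nat) \<Rightarrow> 'n \<Rightarrow> real \<Rightarrow> 'n profile \<Rightarrow> nat \<Rightarrow> real" where
  "eq_util r i s x k = (if i \<in> topk r x s k then 1 - \<bar>s - x i\<bar> else 0)"

definition welfare :: "('n::finite \<Rightarrow> nat) \<Rightarrow> real \<Rightarrow> 'n profile \<Rightarrow> nat \<Rightarrow> real" where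
  "welfare r s x k = (\<Sum>i\<in>UNIV. eq_util r i s x k)"

definition opt_welfare :: "('n::finite \<Rightarrow> nat) \<Rightarrow> 'n profile \<Rightarrow> nat \<Rightarrow> real" where
  "opt_welfare r x k = (SUP s\<in>{0..1}. welfare r s x k)"

definition mech_welfare :: "('n::finite \<Rightarrow> nat) \<Rightarrow> ('n profile \<Rightarrow> real) \<Rightarrow> 'n profile \<Rightarrow> nat \<Rightarrow> real" where
  "mech_welfare r M x k = welfare r (M x) x k"

definition is_mechanism :: "('n profile \<Rightarrow> real) \<Rightarrow> bool" where
  "is_mechanism M \<longleftrightarrow> (\<forall>x. valid_profile x \<longrightarrow> M x \<in> {0..1})"

text \<open>Dominant-strategy incentive compatibility for capacity k: xh are the reports,
  of which only the entries of the other agents matter (entry i is overwritten).\<close>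
definition DIC :: "('n::finite \<Rightarrow> nat) \<Rightarrow> ('n profile \<Rightarrow> real) \<Rightarrow> nat \<Rightarrow> bool" where
  "DIC r M k \<longleftrightarrow>
     (\<forall>i x x' xh. valid_profile x \<longrightarrow> x' \<in> {0..1} \<longrightarrow> valid_profile xh \<longrightarrow>
        eq_util r i (M (xh(i := x i))) x k \<ge> eq_util r i (M (xh(i := x'))) x k)"

definition lb_alpha :: "nat \<Rightarrow> nat \<Rightarrow> real" where
  "lb_alpha n k = (if real k \<le> real_of_int \<lceil>(real n - 1) / 2\<rceil>
                   then 2 * real k / (real k + 1)
                   else max ((real n - 1) / (real k + 1)) 1)"

end

theory Submission
  imports Defs "HOL-Library.Indicator_Function"
begin

text \<open>
  If \<alpha> \<le> 1 there is nothing to show, and \<alpha> \<le> 2 always. Otherwise k < n, and unless the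
  mechanism puts the facility at distance at least 1/2 from a unanimous profile (losing a
  factor 2), moving agents one at a time from location 0 to location 1 makes the facility
  cross 1/2. Placing the pivotal agent j at 1/2, incentive compatibility forces the facility
  to 1/2: were it elsewhere, j could misreport 0 or 1 and pull the facility strictly nearer
  to itself, which pays off when all other agents sit on the original facility. At 1/2 the
  served agents are j and k - 1 agents at distance 1/2, welfare (k + 1)/2, whereas serving
  the larger of the two groups at its own location yields min k \<lceil>(n - 1)/2\<rceil>.
\<close>

lemma higher_prio_irrefl: "\<not> higher_prio r x s i i"
  by (simp add: higher_prio_def)

lemma higher_prio_trans:
  "higher_prio r x s a b \<Longrightarrow> higher_prio r x s b c \<Longrightarrow> higher_prio r x s a c"
  unfolding higher_prio_def by auto

lemma higher_prio_total:
  "inj r \<Longrightarrow> a \<noteq> b \<Longrightarrow> higher_prio r x s a b \<or> higher_prio r x s b a"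
  unfolding higher_prio_def by (metis inj_eq linorder_neqE_linordered_idom linorder_neqE_nat)

lemma card_rank_less:
  fixes less :: "'a::finite \<Rightarrow> 'a \<Rightarrow> bool"
  assumes irrefl: "\<And>a. \<not> less a a"
    and trans: "\<And>a b c. less a b \<Longrightarrow> less b c \<Longrightarrow> less a c"
    and total: "\<And>a b. a \<noteq> b \<Longrightarrow> less a b \<or> less b a"
    and "k \<le> card (UNIV :: 'a set)"
  shows "card {i. card {j. less j i} < k} = k"
proof -
  define rank where "rank i = card {j. less j i}" for i
  have rank_less: "rank a < rank b" if "less a b" for a b
    unfolding rank_def
  proof (rule psubset_card_mono)
    show "{j. less j a} \<subset> {j. less j b}"
      using that irrefl trans by blast
  qed simp
  have "inj rank"
    by (rule injI) (metis rank_less total less_irrefl)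
  have "range rank \<subseteq> {..<card (UNIV :: 'a set)}"
    unfolding rank_def using irrefl by (auto intro!: psubset_card_mono)
  moreover have "card (range rank) = card (UNIV :: 'a set)"
    using \<open>inj rank\<close> by (simp add: card_image)
  ultimately have "range rank = {..<card (UNIV :: 'a set)}"
    by (intro card_subset_eq) auto
  then have "card (rank -` {..<k}) = k"
    using \<open>inj rank\<close> \<open>k \<le> card (UNIV :: 'a set)\<close> by (subst card_vimage_inj) auto
  moreover have "{i. card {j. less j i} < k} = rank -` {..<k}"
    unfolding rank_def by auto
  ultimately show ?thesis
    by simp
qed

lemma card_topk:
  fixes r :: "'n::finite \<Rightarrow> nat"
  assumes "inj r" "k \<le> card (UNIV :: 'n set)"
  shows "card (topk r x s k) = k"
  unfolding topk_def
  using higher_prio_irrefl higher_prio_trans higher_prio_total[OF \<open>inj r\<close>] \<open>k \<le> _\<close>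
  by (rule card_rank_less)

lemma welfare_eq_sum_topk: "welfare r s x k = (\<Sum>i\<in>topk r x s k. 1 - \<bar>s - x i\<bar>)"
  unfolding welfare_def eq_util_def by (simp add: sum.If_cases)

lemma welfare_const:
  fixes r :: "'n::finite \<Rightarrow> nat"
  assumes "inj r" "k \<le> card (UNIV :: 'n set)"
  shows "welfare r s (\<lambda>_. p) k = real k * (1 - \<bar>s - p\<bar>)"
  by (simp add: welfare_eq_sum_topk card_topk[OF assms])

lemma welfare_le_card:
  fixes r :: "'n::finite \<Rightarrow> nat"
  shows "welfare r s x k \<le> real (card (UNIV :: 'n set))"
proof -
  have "welfare r s x k \<le> (\<Sum>i\<in>(UNIV :: 'n set). 1)"
    unfolding welfare_def eq_util_def by (rule sum_mono) auto
  then show ?thesis by simp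
qed

lemma valid_profile_utility_nonneg:
  "valid_profile x \<Longrightarrow> s \<in> {0..1} \<Longrightarrow> 0 \<le> 1 - \<bar>s - x i\<bar>"
  unfolding valid_profile_def by (drule spec[of _ i]) auto

lemma welfare_nonneg:
  assumes "valid_profile x" "s \<in> {0..1}"
  shows "0 \<le> welfare r s x k"
  unfolding welfare_eq_sum_topk
  by (rule sum_nonneg) (rule valid_profile_utility_nonneg[OF assms])

lemma welfare_le_opt_welfare:
  fixes r :: "'n::finite \<Rightarrow> nat"
  assumes "s \<in> {0..1}"
  shows "welfare r s x k \<le> opt_welfare r x k"
  unfolding opt_welfare_def
  by (rule cSUP_upper[OF assms]) (auto intro: bdd_aboveI2 welfare_le_card)

lemma mech_welfare_le_opt_welfare:
  "is_mechanism M \<Longrightarrow> valid_profile x \<Longrightarrow> mech_welfare r M x k \<le> opt_welfare r x k"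
  unfolding mech_welfare_def is_mechanism_def by (simp add: welfare_le_opt_welfare)

lemma mech_welfare_nonneg:
  "is_mechanism M \<Longrightarrow> valid_profile x \<Longrightarrow> 0 \<le> mech_welfare r M x k"
  unfolding mech_welfare_def is_mechanism_def by (simp add: welfare_nonneg)

lemma welfare_ge_min_cluster:
  fixes r :: "'n::finite \<Rightarrow> nat"
  assumes "inj r" "valid_profile x" "s \<in> {0..1}" "k \<le> card (UNIV :: 'n set)"
  shows "min (real k) (real (card {i. x i = s})) \<le> welfare r s x k"
proof (cases "k \<le> card {i. x i = s}")
  case True
  have "topk r x s k \<subseteq> {i. x i = s}"
  proof
    fix i assume i: "i \<in> topk r x s k"
    show "i \<in> {i. x i = s}"
    proof (rule ccontr)
      assume "i \<notin> {i. x i = s}"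
      then have "{i. x i = s} \<subseteq> {j. higher_prio r x s j i}"
        by (auto simp: higher_prio_def)
      then have "card {i. x i = s} \<le> card {j. higher_prio r x s j i}"
        by (rule card_mono[rotated]) simp
      then show False
        using i True unfolding topk_def by simp
    qed
  qed
  then have "welfare r s x k = real (card (topk r x s k))"
    unfolding welfare_eq_sum_topk by (subst sum.cong[of _ _ _ "\<lambda>_. 1"]) auto
  then show ?thesis
    using card_topk[OF assms(1,4)] by simp
next
  case False
  have cluster_served: "{i. x i = s} \<subseteq> topk r x s k"
  proof
    fix i assume i: "i \<in> {i. x i = s}"
    have "{j. higher_prio r x s j i} \<subseteq> {i. x i = s} - {i}"
      using i higher_prio_irrefl[of r x s i] by (auto simp: higher_prio_def)
    then have "card {j. higher_prio r x s j i} \<le> card ({i. x i = s} - {i})"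
      by (rule card_mono[rotated]) simp
    also have "\<dots> < card {i. x i = s}"
      by (rule card_Diff1_less) (use i in auto)
    finally show "i \<in> topk r x s k"
      using False unfolding topk_def by simp
  qed
  have "(\<Sum>i\<in>{i. x i = s}. 1 - \<bar>s - x i\<bar>) \<le> welfare r s x k"
    unfolding welfare_eq_sum_topk
    by (rule sum_mono2) (use cluster_served valid_profile_utility_nonneg[OF assms(2,3)] in auto)
  then show ?thesis
    by simp
qed

lemma opt_welfare_pos:
  fixes r :: "'n::finite \<Rightarrow> nat"
  assumes "inj r" "valid_profile x" "1 \<le> k" "k \<le> card (UNIV :: 'n set)"
  shows "0 < opt_welfare r x k"
proof -
  obtain i :: 'n where True by simp
  have s: "x i \<in> {0..1}"
    using assms(2) unfolding valid_profile_def by simp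
  have "1 \<le> card {j. x j = x i}"
    by (simp add: Suc_le_eq card_gt_0_iff exI[of _ i])
  then have "1 \<le> welfare r (x i) x k"
    using welfare_ge_min_cluster[OF assms(1,2) s assms(4)] assms(3) by linarith
  then show ?thesis
    using welfare_le_opt_welfare[OF s, of r x k] by linarith
qed

lemma unanimous_profile_far_facility:
  fixes r :: "'n::finite \<Rightarrow> nat"
  assumes "inj r" "k \<le> card (UNIV :: 'n set)" "is_mechanism M" "p \<in> {0..1}"
    and far: "1/2 \<le> \<bar>M (\<lambda>_. p) - p\<bar>"
  shows "2 * mech_welfare r M (\<lambda>_. p) k \<le> opt_welfare r (\<lambda>_. p) k"
proof -
  have "2 * mech_welfare r M (\<lambda>_. p) k = real k * (2 * (1 - \<bar>M (\<lambda>_. p) - p\<bar>))"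
    unfolding mech_welfare_def welfare_const[OF assms(1,2)] by simp
  also have "\<dots> \<le> real k * 1"
    using far by (intro mult_left_mono) auto
  also have "\<dots> = welfare r p (\<lambda>_. p) k"
    unfolding welfare_const[OF assms(1,2)] by simp
  also have "\<dots> \<le> opt_welfare r (\<lambda>_. p) k"
    using assms(4) by (rule welfare_le_opt_welfare)
  finally show ?thesis .
qed

lemma lb_alpha_le_2: "1 \<le> k \<Longrightarrow> lb_alpha n k \<le> 2"
proof (cases "real k \<le> real_of_int \<lceil>(real n - 1) / 2\<rceil>")
  case False
  then have "(real n - 1) / 2 < real k"
    using le_of_int_ceiling[of "(real n - 1) / 2"] by linarith
  then have "(real n - 1) / (real k + 1) \<le> 2"
    by (simp add: field_simps)
  with False show ?thesis
    unfolding lb_alpha_def by simp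
qed (simp add: lb_alpha_def field_simps)

lemma lb_alpha_diag_le_1: "1 \<le> n \<Longrightarrow> lb_alpha n n \<le> 1"
proof -
  assume "1 \<le> n"
  then have "\<lceil>(real n - 1) / 2\<rceil> \<le> int n - 1"
    by (intro ceiling_le) simp
  then show ?thesis
    unfolding lb_alpha_def by simp
qed

lemma lb_alpha_half_le_max_min:
  fixes a b :: nat
  assumes "1 \<le> k" "a + b + 1 = n" "1 < lb_alpha n k"
  shows "lb_alpha n k * (real k + 1) / 2 \<le> max (min (real k) (real a)) (min (real k) (real b))"
proof (cases "real k \<le> real_of_int \<lceil>(real n - 1) / 2\<rceil>")
  case True
  have "k \<le> a \<or> k \<le> b"
  proof (rule ccontr)
    assume "\<not> (k \<le> a \<or> k \<le> b)"
    then have "(real n - 1) / 2 \<le> real_of_int (int k - 1)"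
      using assms(2) by simp
    then have "\<lceil>(real n - 1) / 2\<rceil> \<le> int k - 1"
      by (rule ceiling_le)
    then show False
      using True by linarith
  qed
  moreover have "lb_alpha n k * (real k + 1) / 2 = real k"
    unfolding lb_alpha_def using True by (simp add: field_simps)
  ultimately show ?thesis
    by auto
next
  case False
  then have "(real n - 1) / 2 \<le> real k"
    using le_of_int_ceiling[of "(real n - 1) / 2"] by linarith
  moreover have "lb_alpha n k = (real n - 1) / (real k + 1)"
    using assms(3) False unfolding lb_alpha_def by (auto simp: max_def)
  moreover have "(real n - 1) / 2 \<le> max (real a) (real b)"
    using assms(2) by auto
  ultimately show ?thesis
    by (auto simp: field_simps)
qed

lemma DIC_deviation_not_nearer:
  fixes r :: "'n::finite \<Rightarrow> nat"
  assumes "is_mechanism M" "DIC r M k" "1 \<le> k" "k < card (UNIV :: 'n set)"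
    and "valid_profile xh" "y \<in> {0..1}" "y' \<in> {0..1}"
    and missed: "M (xh(j := y)) \<noteq> y"
  shows "\<bar>M (xh(j := y')) - M (xh(j := y))\<bar> \<le> \<bar>M (xh(j := y')) - y\<bar>"
proof (rule ccontr)
  define c where "c = M (xh(j := y))"
  define c' where "c' = M (xh(j := y'))"
  assume "\<not> \<bar>M (xh(j := y')) - M (xh(j := y))\<bar> \<le> \<bar>M (xh(j := y')) - y\<bar>"
  then have nearer: "\<bar>c' - y\<bar> < \<bar>c' - c\<bar>"
    unfolding c_def c'_def by simp
  have "valid_profile (xh(j := y))" "valid_profile (xh(j := y'))"
    using assms(5-7) by (auto simp: valid_profile_def)
  then have "c \<in> {0..1}" "c' \<in> {0..1}"
    using assms(1) unfolding c_def c'_def is_mechanism_def by auto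
  \<comment> \<open>True locations: everybody else sits on c, so j is never served truthfully,
    while the misreport y' moves the facility to c', nearer to j than to everybody else.\<close>
  define x where "x = (\<lambda>_. c)(j := y)"
  have "valid_profile x"
    using \<open>c \<in> {0..1}\<close> assms(6) by (simp add: x_def valid_profile_def)
  then have DIC_j: "eq_util r j c' x k \<le> eq_util r j c x k"
    using assms(2,5,7) unfolding DIC_def c_def c'_def x_def by (metis fun_upd_same)
  have "UNIV - {j} \<subseteq> {l. higher_prio r x c l j}"
    using missed unfolding x_def c_def higher_prio_def by auto
  then have "card (UNIV - {j}) \<le> card {l. higher_prio r x c l j}"
    by (rule card_mono[rotated]) simp
  then have "eq_util r j c x k = 0"
    using assms(4) by (auto simp: eq_util_def topk_def card_Diff_singleton)
  moreover have "{l. higher_prio r x c' l j} = {}"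
    using nearer higher_prio_irrefl[of r x c' j] unfolding x_def higher_prio_def by auto
  then have "eq_util r j c' x k = 1 - \<bar>c' - y\<bar>"
    using assms(3) by (simp add: eq_util_def topk_def x_def)
  moreover have "\<bar>c' - c\<bar> \<le> 1"
    using \<open>c \<in> {0..1}\<close> \<open>c' \<in> {0..1}\<close> by auto
  ultimately show False
    using DIC_j nearer by linarith
qed

lemma DIC_fixes_crossing_point:
  fixes r :: "'n::finite \<Rightarrow> nat"
  assumes "is_mechanism M" "DIC r M k" "1 \<le> k" "k < card (UNIV :: 'n set)"
    and "valid_profile xh" "a \<in> {0..1}" "b \<in> {0..1}" "t \<in> {0..1}"
    and below: "M (xh(j := b)) \<le> t" and above: "t < M (xh(j := a))"
  shows "M (xh(j := t)) = t"
proof (rule ccontr)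
  assume ne: "M (xh(j := t)) \<noteq> t"
  note not_nearer = DIC_deviation_not_nearer[OF assms(1-5) assms(8) _ ne]
  show False
  proof (cases "M (xh(j := t)) < t")
    case True
    then show False
      using not_nearer[OF assms(6)] above by linarith
  next
    case False
    then show False
      using not_nearer[OF assms(7)] below ne by linarith
  qed
qed

lemma exists_insert_pivot:
  fixes P :: "'a::finite set \<Rightarrow> bool"
  assumes "P {}" "\<not> P UNIV"
  shows "\<exists>S j. j \<notin> S \<and> P S \<and> \<not> P (insert j S)"
proof (rule ccontr)
  assume no_pivot: "\<not> ?thesis"
  have "P S" if "finite S" for S
    using that by (induction S rule: finite_induct) (use assms(1) no_pivot in auto)
  then show False
    using assms(2) by simp
qed

lemma DIC_exists_pivot_profile:
  fixes r :: "'n::finite \<Rightarrow> nat"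
  assumes "is_mechanism M" "DIC r M k" "1 \<le> k" "k < card (UNIV :: 'n set)"
    and "M (\<lambda>_. 0) \<le> 1/2" "1/2 < M (\<lambda>_. 1)"
  shows "\<exists>T j. j \<notin> T \<and> M ((indicator T)(j := 1/2)) = 1/2"
proof -
  have "indicator {} = (\<lambda>_::'n. 0::real)"
    by (simp add: fun_eq_iff)
  then obtain T j where "j \<notin> T" and below: "M (indicator T) \<le> 1/2"
    and above: "\<not> M (indicator (insert j T)) \<le> 1/2"
    using exists_insert_pivot[of "\<lambda>T. M (indicator T) \<le> (1/2::real)"] assms(5,6) by auto
  have "valid_profile (indicator T)"
    by (simp add: valid_profile_def indicator_def)
  moreover have "(indicator T)(j := 0) = (indicator T :: 'n profile)"
    and "(indicator T)(j := 1) = (indicator (insert j T) :: 'n profile)"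
    using \<open>j \<notin> T\<close> by (auto simp: fun_eq_iff indicator_def)
  ultimately have "M ((indicator T)(j := 1/2)) = 1/2"
    using below above
    by (intro DIC_fixes_crossing_point[OF assms(1-4), where a = 1 and b = 0]) auto
  with \<open>j \<notin> T\<close> show ?thesis
    by blast
qed

lemma welfare_pivot_profile:
  fixes r :: "'n::finite \<Rightarrow> nat"
  assumes "inj r" "1 \<le> k" "k \<le> card (UNIV :: 'n set)" "j \<notin> T"
  shows "welfare r (1/2) ((indicator T)(j := 1/2)) k = (real k + 1) / 2"
proof -
  define Z :: "'n profile" where "Z = (indicator T)(j := 1/2)"
  have "{l. higher_prio r Z (1/2) l j} = {}"
    using higher_prio_irrefl[of r Z "1/2" j] by (auto simp: Z_def higher_prio_def indicator_def)
  then have served: "j \<in> topk r Z (1/2) k"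
    using assms(2) by (simp add: topk_def)
  have "welfare r (1/2) Z k
      = (1 - \<bar>1/2 - Z j\<bar>) + (\<Sum>i\<in>topk r Z (1/2) k - {j}. 1 - \<bar>1/2 - Z i\<bar>)"
    unfolding welfare_eq_sum_topk using served by (simp add: sum.remove)
  also have "\<dots> = 1 + (\<Sum>i\<in>topk r Z (1/2) k - {j}. 1/2)"
    by (intro arg_cong2[where f = "(+)"] sum.cong) (auto simp: Z_def indicator_def)
  also have "\<dots> = 1 + real (k - 1) / 2"
    using card_topk[OF assms(1,3)] served by (simp add: card_Diff_singleton)
  also have "\<dots> = (real k + 1) / 2"
    using assms(2) by (simp add: of_nat_diff field_simps)
  finally show ?thesis
    unfolding Z_def .
qed

lemma opt_welfare_pivot_profile_ge:
  fixes r :: "'n::finite \<Rightarrow> nat"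
  assumes "inj r" "k \<le> card (UNIV :: 'n set)" "j \<notin> T"
  shows "max (min (real k) (real (card T))) (min (real k) (real (card (- insert j T))))
    \<le> opt_welfare r ((indicator T)(j := 1/2)) k"
proof -
  define Z :: "'n profile" where "Z = (indicator T)(j := 1/2)"
  have "valid_profile Z"
    by (simp add: Z_def valid_profile_def indicator_def)
  moreover have "{i. Z i = 1} = T" "{i. Z i = 0} = - insert j T"
    using assms(3) by (auto simp: Z_def indicator_def)
  ultimately have "min (real k) (real (card T)) \<le> welfare r 1 Z k"
    and "min (real k) (real (card (- insert j T))) \<le> welfare r 0 Z k"
    using welfare_ge_min_cluster[OF assms(1) _ _ assms(2)]
    by (metis atLeastAtMost_iff order_refl zero_le_one)+
  then show ?thesis
    using welfare_le_opt_welfare[of 1 r Z k] welfare_le_opt_welfare[of 0 r Z k]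
    unfolding Z_def by simp
qed

lemma pivot_profile_lb_alpha_ratio:
  fixes r :: "'n::finite \<Rightarrow> nat"
  assumes "inj r" "1 \<le> k" "k \<le> card (UNIV :: 'n set)" "j \<notin> T"
    and "1 < lb_alpha (card (UNIV :: 'n set)) k"
  shows "lb_alpha (card (UNIV :: 'n set)) k * welfare r (1/2) ((indicator T)(j := 1/2)) k
    \<le> opt_welfare r ((indicator T)(j := 1/2)) k"
proof -
  have "card (insert j T \<union> - insert j T) = card (insert j T) + card (- insert j T)"
    by (rule card_Un_disjoint) auto
  then have "card T + card (- insert j T) + 1 = card (UNIV :: 'n set)"
    using assms(4) by simp
  have "lb_alpha (card (UNIV :: 'n set)) k * welfare r (1/2) ((indicator T)(j := 1/2)) k
      = lb_alpha (card (UNIV :: 'n set)) k * (real k + 1) / 2"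
    by (simp add: welfare_pivot_profile[OF assms(1-4)])
  also have "\<dots> \<le> max (min (real k) (real (card T))) (min (real k) (real (card (- insert j T))))"
    using lb_alpha_half_le_max_min[OF assms(2) \<open>_ = card UNIV\<close> assms(5)] .
  also have "\<dots> \<le> opt_welfare r ((indicator T)(j := 1/2)) k"
    using opt_welfare_pivot_profile_ge[OF assms(1,3,4)] .
  finally show ?thesis .
qed

lemma DIC_exists_profile_lb_alpha_ratio:
  fixes r :: "'n::finite \<Rightarrow> nat"
  assumes "inj r" "1 \<le> k" "k \<le> card (UNIV :: 'n set)" "is_mechanism M" "DIC r M k"
  shows "\<exists>x. valid_profile x
    \<and> lb_alpha (card (UNIV :: 'n set)) k * mech_welfare r M x k \<le> opt_welfare r x k"
proof -
  define \<alpha> where "\<alpha> = lb_alpha (card (UNIV :: 'n set)) k"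
  have valid_const: "valid_profile (\<lambda>_::'n. p)" if "p \<in> {0..1}" for p
    using that by (simp add: valid_profile_def)
  show ?thesis
  proof (cases "\<alpha> \<le> 1")
    case True
    have "0 \<le> mech_welfare r M (\<lambda>_. 0) k"
      using mech_welfare_nonneg[OF assms(4) valid_const] by simp
    from mult_right_mono[OF True this]
    have "\<alpha> * mech_welfare r M (\<lambda>_. 0) k \<le> mech_welfare r M (\<lambda>_. 0) k"
      by simp
    also have "\<dots> \<le> opt_welfare r (\<lambda>_. 0) k"
      using mech_welfare_le_opt_welfare[OF assms(4) valid_const] by simp
    finally show ?thesis
      using valid_const[of 0] unfolding \<alpha>_def by auto
  next
    case False
    then have "k < card (UNIV :: 'n set)"
      using lb_alpha_diag_le_1 assms(2,3) unfolding \<alpha>_def by (metis le_neq_implies_less le_trans)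
    have far_unanimous: ?thesis if "p \<in> {0..1}" "1/2 \<le> \<bar>M (\<lambda>_. p) - p\<bar>" for p
    proof -
      have "\<alpha> * mech_welfare r M (\<lambda>_. p) k \<le> 2 * mech_welfare r M (\<lambda>_. p) k"
        unfolding \<alpha>_def
        by (rule mult_right_mono[OF lb_alpha_le_2[OF assms(2)]
              mech_welfare_nonneg[OF assms(4) valid_const[OF that(1)]]])
      also have "\<dots> \<le> opt_welfare r (\<lambda>_. p) k"
        by (rule unanimous_profile_far_facility[OF assms(1,3,4) that])
      finally show ?thesis
        using valid_const[OF that(1)] unfolding \<alpha>_def by blast
    qed
    consider (far0) "1/2 \<le> \<bar>M (\<lambda>_. 0) - 0\<bar>" | (far1) "1/2 \<le> \<bar>M (\<lambda>_. 1) - 1\<bar>"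
      | (crossing) "M (\<lambda>_. 0) \<le> 1/2" "1/2 < M (\<lambda>_. 1)"
      by arith
    then show ?thesis
    proof cases
      case far0
      then show ?thesis
        using far_unanimous[of 0] by simp
    next
      case far1
      then show ?thesis
        using far_unanimous[of 1] by simp
    next
      case crossing
      then obtain T j where "j \<notin> T" and half: "M ((indicator T)(j := 1/2)) = 1/2"
        using DIC_exists_pivot_profile[OF assms(4,5,2) \<open>k < _\<close>] by blast
      have "valid_profile ((indicator T)(j := 1/2))"
        by (simp add: valid_profile_def indicator_def)
      moreover have "\<alpha> * mech_welfare r M ((indicator T)(j := 1/2)) k
          \<le> opt_welfare r ((indicator T)(j := 1/2)) k"
        using pivot_profile_lb_alpha_ratio[OF assms(1-3) \<open>j \<notin> T\<close>] False
        unfolding mech_welfare_def half \<alpha>_def by simp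
      ultimately show ?thesis
        unfolding \<alpha>_def by blast
    qed
  qed
qed

theorem theorem4p3:
  fixes r :: "'n::finite \<Rightarrow> nat" and M :: "'n profile \<Rightarrow> real" and k :: nat
  assumes "card (UNIV :: 'n set) \<ge> 2"
    and "inj r"
    and "1 \<le> k" and "k \<le> card (UNIV :: 'n set)"
    and "is_mechanism M"
    and "DIC r M k"
  shows "\<forall>\<alpha>'. \<alpha>' < lb_alpha (card (UNIV :: 'n set)) k \<longrightarrow>
           (\<exists>x. valid_profile x \<and> opt_welfare r x k > \<alpha>' * mech_welfare r M x k)"
proof (intro allI impI)
  fix \<alpha>' assume "\<alpha>' < lb_alpha (card (UNIV :: 'n set)) k"
  obtain x where "valid_profile x"
    and ratio: "lb_alpha (card (UNIV :: 'n set)) k * mech_welfare r M x k \<le> opt_welfare r x k"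
    using DIC_exists_profile_lb_alpha_ratio[OF assms(2-6)] by blast
  moreover have "0 \<le> mech_welfare r M x k"
    using mech_welfare_nonneg[OF assms(5) \<open>valid_profile x\<close>] .
  moreover have "0 < opt_welfare r x k"
    using opt_welfare_pos[OF assms(2) \<open>valid_profile x\<close> assms(3,4)] .
  ultimately have "\<alpha>' * mech_welfare r M x k < opt_welfare r x k"
  proof (cases "mech_welfare r M x k = 0")
    case False
    with \<open>0 \<le> mech_welfare r M x k\<close> \<open>\<alpha>' < _\<close>
    have "\<alpha>' * mech_welfare r M x k < lb_alpha (card (UNIV :: 'n set)) k * mech_welfare r M x k"
      by (intro mult_strict_right_mono) auto
    with ratio show ?thesis
      by linarith
  qed simp
  with \<open>valid_profile x\<close> show "\<exists>x. valid_profile x \<and> opt_welfare r x k > \<alpha>' * mech_welfare r M x k"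
    by blast
qed

end
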